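(* Let $m,n\ge 2$ be integers with $n/m$ a positive integer, and suppose there exists a generalized quadrangle $\mathcal{G}$ of order $(m,n)$ which contains a subquadrangle $\mathcal{G}'$ of order $(m,n/m)$. Then there exists an $(m,n+1;8)$-bipartite biregular graph of order $(m+n+1)\frac{m^2-1}{m}n$.
   Context: A generalized quadrangle is a finite point-line incidence geometry whose incidence (Levi) graph — the bipartite graph on points and lines with a point adjacent to a line iff incident — is connected, of diameter 4 and girth 8. It has order $(s,t)$ if each line has exactly $s+1$ points and each point lies on exactly $t+1$ lines. A subquadrangle of $\mathcal{G}$ is a generalized quadrangle whose points and lines are subsets of those of $\mathcal{G}$ with the inherited incidence. For integers $a,b\geq 2$ and even $g\ge4$, an $(a,b;g)$-bipartite biregular graph is a finite simple bipartite graph of girth exactly $g$ in which all vertices of one bipartition class have degree $a$ and all vertices of the other class have degree $b$. *)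

theory Defs
  imports Main
begin

definition is_walk :: "('v \<Rightarrow> 'v \<Rightarrow> bool) \<Rightarrow> 'v list \<Rightarrow> bool" where
  "is_walk E xs \<longleftrightarrow> (\<forall>i. Suc i < length xs \<longrightarrow> E (xs ! i) (xs ! Suc i))"

definition is_cycle :: "'v set \<Rightarrow> ('v \<Rightarrow> 'v \<Rightarrow> bool) \<Rightarrow> 'v list \<Rightarrow> bool" where
  "is_cycle V E xs \<longleftrightarrow> length xs \<ge> 3 \<and> distinct xs \<and> set xs \<subseteq> V \<and> is_walk E xs
     \<and> E (last xs) (hd xs)"

definition has_girth :: "'v set \<Rightarrow> ('v \<Rightarrow> 'v \<Rightarrow> bool) \<Rightarrow> nat \<Rightarrow> bool" where
  "has_girth V E g \<longleftrightarrow> (\<exists>c. is_cycle V E c \<and> length c = g) \<and>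
     (\<forall>c. is_cycle V E c \<longrightarrow> g \<le> length c)"

text \<open>There is a walk in V from u to v with at most k edges (i.e. dist u v <= k).\<close>
definition reach_le :: "'v set \<Rightarrow> ('v \<Rightarrow> 'v \<Rightarrow> bool) \<Rightarrow> nat \<Rightarrow> 'v \<Rightarrow> 'v \<Rightarrow> bool" where
  "reach_le V E k u v \<longleftrightarrow> (\<exists>xs. xs \<noteq> [] \<and> set xs \<subseteq> V \<and> is_walk E xs \<and>
     hd xs = u \<and> last xs = v \<and> length xs \<le> Suc k)"

definition graph_connected :: "'v set \<Rightarrow> ('v \<Rightarrow> 'v \<Rightarrow> bool) \<Rightarrow> bool" where
  "graph_connected V E \<longleftrightarrow> (\<forall>u\<in>V. \<forall>v\<in>V. \<exists>k. reach_le V E k u v)"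

text \<open>Diameter exactly d (d \<ge> 1): all distances at most d, some distance exactly d.\<close>
definition has_diameter :: "'v set \<Rightarrow> ('v \<Rightarrow> 'v \<Rightarrow> bool) \<Rightarrow> nat \<Rightarrow> bool" where
  "has_diameter V E d \<longleftrightarrow> (\<forall>u\<in>V. \<forall>v\<in>V. reach_le V E d u v) \<and>
     (\<exists>u\<in>V. \<exists>v\<in>V. \<not> reach_le V E (d - 1) u v)"

definition simple_graph :: "'v set \<Rightarrow> ('v \<Rightarrow> 'v \<Rightarrow> bool) \<Rightarrow> bool" where
  "simple_graph V E \<longleftrightarrow> finite V \<and> (\<forall>x y. E x y \<longrightarrow> x \<in> V \<and> y \<in> V \<and> E y x \<and> x \<noteq> y)"

definition bipartite_biregular :: "nat \<Rightarrow> nat \<Rightarrow> nat \<Rightarrow> 'v set \<Rightarrow> ('v \<Rightarrow> 'v \<Rightarrow> bool) \<Rightarrow> bool" where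
  "bipartite_biregular a b g V E \<longleftrightarrow> simple_graph V E \<and>
     (\<exists>A B. A \<union> B = V \<and> A \<inter> B = {} \<and>
        (\<forall>x y. E x y \<longrightarrow> (x \<in> A \<and> y \<in> B) \<or> (x \<in> B \<and> y \<in> A)) \<and>
        (\<forall>x\<in>A. card {y \<in> V. E x y} = a) \<and>
        (\<forall>x\<in>B. card {y \<in> V. E x y} = b)) \<and>
     has_girth V E g"

definition levi_vertices :: "'p set \<Rightarrow> 'l set \<Rightarrow> ('p + 'l) set" where
  "levi_vertices P L = Inl ` P \<union> Inr ` L"

definition levi_adj :: "'p set \<Rightarrow> 'l set \<Rightarrow> ('p \<Rightarrow> 'l \<Rightarrow> bool) \<Rightarrow> 'p + 'l \<Rightarrow> 'p + 'l \<Rightarrow> bool" where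
  "levi_adj P L I x y \<longleftrightarrow> (\<exists>p l. p \<in> P \<and> l \<in> L \<and> I p l \<and>
     ((x = Inl p \<and> y = Inr l) \<or> (x = Inr l \<and> y = Inl p)))"

definition gen_quadrangle :: "'p set \<Rightarrow> 'l set \<Rightarrow> ('p \<Rightarrow> 'l \<Rightarrow> bool) \<Rightarrow> bool" where
  "gen_quadrangle P L I \<longleftrightarrow> finite P \<and> finite L \<and>
     graph_connected (levi_vertices P L) (levi_adj P L I) \<and>
     has_diameter (levi_vertices P L) (levi_adj P L I) 4 \<and>
     has_girth (levi_vertices P L) (levi_adj P L I) 8"

definition has_order :: "'p set \<Rightarrow> 'l set \<Rightarrow> ('p \<Rightarrow> 'l \<Rightarrow> bool) \<Rightarrow> nat \<Rightarrow> nat \<Rightarrow> bool" where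
  "has_order P L I s t \<longleftrightarrow> (\<forall>l\<in>L. card {p \<in> P. I p l} = s + 1) \<and>
     (\<forall>p\<in>P. card {l \<in> L. I p l} = t + 1)"

definition gen_quadrangle_of_order ::
  "'p set \<Rightarrow> 'l set \<Rightarrow> ('p \<Rightarrow> 'l \<Rightarrow> bool) \<Rightarrow> nat \<Rightarrow> nat \<Rightarrow> bool" where
  "gen_quadrangle_of_order P L I s t \<longleftrightarrow> gen_quadrangle P L I \<and> has_order P L I s t"

definition subquadrangle ::
  "'p set \<Rightarrow> 'l set \<Rightarrow> 'p set \<Rightarrow> 'l set \<Rightarrow> ('p \<Rightarrow> 'l \<Rightarrow> bool) \<Rightarrow> bool" where
  "subquadrangle P' L' P L I \<longleftrightarrow> P' \<subseteq> P \<and> L' \<subseteq> L \<and> gen_quadrangle P' L' I"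

end

(* Delete from the quadrangle of order (m, n) the points and lines of the subquadrangle of order
   (m, t'), where n = m t'. A line of the subquadrangle has all its points in it, and any other
   line meets it in at most one point; since n = m t', counting flags shows that every remaining
   line meets it in exactly one point. Hence in what remains every line has m points and every
   point keeps all its n + 1 lines, and the incidence graph, being a subgraph of the Levi graph
   of the quadrangle, has girth at least 8. An 8-cycle comes from two remaining non-collinear
   points with two remaining common neighbours. Counting points and lines of both quadrangles
   gives (m + n + 1)(m^2 - 1) t' vertices. *)

theory Submission
  imports Defs
begin

lemma card_ge_2_ex_other:
  assumes "2 \<le> card A"
  shows "\<exists>y\<in>A. y \<noteq> x"
proof (rule ccontr)
  assume "\<not> ?thesis"
  then have "card A \<le> card {x}"
    by (intro card_mono) auto
  with assms show False
    by simp
qed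

lemma is_walk_Cons_Cons [simp]: "is_walk E (x # y # xs) \<longleftrightarrow> E x y \<and> is_walk E (y # xs)"
  by (auto simp: is_walk_def nth_Cons split: nat.splits)

lemma is_walk_singleton [simp]: "is_walk E [x]"
  by (simp add: is_walk_def)

lemma is_cycle_mono:
  assumes "is_cycle V E c" "V \<subseteq> V'" "\<And>x y. E x y \<Longrightarrow> E' x y"
  shows "is_cycle V' E' c"
  using assms by (auto simp: is_cycle_def is_walk_def)

lemma is_cycle_map:
  assumes "is_cycle V E c" "inj_on f V" "f ` V \<subseteq> V'"
    and "\<And>x y. x \<in> V \<Longrightarrow> y \<in> V \<Longrightarrow> E x y \<Longrightarrow> E' (f x) (f y)"
  shows "is_cycle V' E' (map f c)"
proof -
  have c: "3 \<le> length c" "distinct c" "set c \<subseteq> V" "is_walk E c" "E (last c) (hd c)"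
    using assms(1) by (auto simp: is_cycle_def)
  then have "c \<noteq> []" by auto
  have "is_walk E' (map f c)"
    unfolding is_walk_def
  proof (intro allI impI)
    fix i assume "Suc i < length (map f c)"
    with c(3,4) show "E' (map f c ! i) (map f c ! Suc i)"
      by (auto simp: is_walk_def intro!: assms(4))
  qed
  moreover have "E' (last (map f c)) (hd (map f c))"
  proof -
    have "last c \<in> V" "hd c \<in> V" using \<open>c \<noteq> []\<close> c(3) by auto
    then show ?thesis using \<open>c \<noteq> []\<close> c(5) by (simp add: last_map hd_map assms(4))
  qed
  moreover have "distinct (map f c)"
    using c(2,3) assms(2) by (simp add: distinct_map inj_on_subset)
  ultimately show ?thesis
    using c(1,3) assms(3) by (auto simp: is_cycle_def)
qed

lemma bipartite_biregular_inj_image: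
  assumes bb: "bipartite_biregular a b g V E" and inj: "inj_on h V"
  defines "E' \<equiv> \<lambda>x y. \<exists>u\<in>V. \<exists>v\<in>V. E u v \<and> x = h u \<and> y = h v"
  shows "bipartite_biregular a b g (h ` V) E'"
proof -
  have simple: "simple_graph V E" and girth: "has_girth V E g"
    using bb by (auto simp: bipartite_biregular_def)
  obtain A B where AB: "A \<union> B = V" "A \<inter> B = {}"
    "\<forall>x y. E x y \<longrightarrow> (x \<in> A \<and> y \<in> B) \<or> (x \<in> B \<and> y \<in> A)"
    "\<forall>x\<in>A. card {y \<in> V. E x y} = a" "\<forall>x\<in>B. card {y \<in> V. E x y} = b"
    using bb by (auto simp: bipartite_biregular_def)
  have E: "x \<in> V \<and> y \<in> V \<and> E y x \<and> x \<noteq> y" if "E x y" for x y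
    using simple that by (auto simp: simple_graph_def)
  have E'_h: "E' (h u) (h v) \<longleftrightarrow> E u v" if "u \<in> V" "v \<in> V" for u v
    using that inj E by (auto simp: E'_def inj_on_eq_iff)
  have simple': "simple_graph (h ` V) E'"
    using simple inj E by (fastforce simp: simple_graph_def E'_def inj_on_eq_iff)
  have deg: "card {y \<in> h ` V. E' (h u) y} = card {v \<in> V. E u v}" if "u \<in> V" for u
  proof -
    have "{y \<in> h ` V. E' (h u) y} = h ` {v \<in> V. E u v}"
      using that E'_h by auto
    then show ?thesis
      using inj by (simp add: card_image inj_on_subset)
  qed
  have "h ` A \<union> h ` B = h ` V" "h ` A \<inter> h ` B = {}"
    using AB(1,2) inj_on_image_Int[OF inj, of A B] by auto
  moreover have "\<forall>x y. E' x y \<longrightarrow> (x \<in> h ` A \<and> y \<in> h ` B) \<or> (x \<in> h ` B \<and> y \<in> h ` A)"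
    using AB(3) by (fastforce simp: E'_def)
  moreover have "\<forall>x\<in>h ` A. card {y \<in> h ` V. E' x y} = a" "\<forall>x\<in>h ` B. card {y \<in> h ` V. E' x y} = b"
    using AB(1,4,5) deg by auto
  moreover have "has_girth (h ` V) E' g"
    unfolding has_girth_def
  proof (intro conjI allI impI)
    obtain c where c: "is_cycle V E c" "length c = g"
      using girth by (auto simp: has_girth_def)
    have "is_cycle (h ` V) E' (map h c)"
      using c(1) inj by (rule is_cycle_map) (auto simp: E'_h)
    with c(2) show "\<exists>c. is_cycle (h ` V) E' c \<and> length c = g" by auto
  next
    fix c assume c: "is_cycle (h ` V) E' c"
    have "is_cycle V E (map (inv_into V h) c)"
      using c inj_on_inv_into[of "h ` V" h V]
      by (rule is_cycle_map) (auto simp: E'_def inv_into_into inj)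
    then show "g \<le> length c"
      using girth by (auto simp: has_girth_def)
  qed
  ultimately show ?thesis
    using simple' unfolding bipartite_biregular_def by blast
qed

lemma bipartite_biregular_nat_copy:
  assumes "bipartite_biregular a b g V E"
  shows "\<exists>(V' :: nat set) E'. bipartite_biregular a b g V' E' \<and> card V' = card V"
proof -
  have "finite V"
    using assms by (simp add: bipartite_biregular_def simple_graph_def)
  then obtain h :: "_ \<Rightarrow> nat" where "inj_on h V"
    using finite_imp_inj_to_nat_seg by blast
  then show ?thesis
    using bipartite_biregular_inj_image[OF assms] card_image by blast
qed

lemma levi_adj_simps [simp]:
  "levi_adj P L I (Inl p) (Inr l) \<longleftrightarrow> p \<in> P \<and> l \<in> L \<and> I p l"
  "levi_adj P L I (Inr l) (Inl p) \<longleftrightarrow> p \<in> P \<and> l \<in> L \<and> I p l"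
  "\<not> levi_adj P L I (Inl p) (Inl q)"
  "\<not> levi_adj P L I (Inr l) (Inr k)"
  by (auto simp: levi_adj_def)

lemma levi_adj_Inl: "levi_adj P L I (Inl p) y \<longleftrightarrow> (\<exists>l\<in>L. y = Inr l \<and> p \<in> P \<and> I p l)"
  by (cases y) auto

lemma levi_adj_Inr: "levi_adj P L I (Inr l) y \<longleftrightarrow> (\<exists>p\<in>P. y = Inl p \<and> l \<in> L \<and> I p l)"
  by (cases y) auto

lemma card_levi_vertices:
  assumes "finite P" "finite L"
  shows "card (levi_vertices P L) = card P + card L"
  unfolding levi_vertices_def using assms by (subst card_Un_disjoint) (auto simp: card_image)

lemma levi_bipartite_biregular:
  assumes "finite P" "finite L"
    and "\<And>l. l \<in> L \<Longrightarrow> card {p \<in> P. I p l} = a"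
    and "\<And>p. p \<in> P \<Longrightarrow> card {l \<in> L. I p l} = b"
    and "has_girth (levi_vertices P L) (levi_adj P L I) g"
  shows "bipartite_biregular a b g (levi_vertices P L) (levi_adj P L I)"
proof -
  have "simple_graph (levi_vertices P L) (levi_adj P L I)"
    using assms(1,2) by (auto simp: simple_graph_def levi_vertices_def levi_adj_def)
  moreover have "card {y \<in> levi_vertices P L. levi_adj P L I (Inr l) y} = a" if "l \<in> L" for l
  proof -
    have "{y \<in> levi_vertices P L. levi_adj P L I (Inr l) y} = Inl ` {p \<in> P. I p l}"
      using that by (auto simp: levi_vertices_def levi_adj_Inr)
    then show ?thesis
      using assms(3) that by (simp add: card_image)
  qed
  moreover have "card {y \<in> levi_vertices P L. levi_adj P L I (Inl p) y} = b" if "p \<in> P" for p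
  proof -
    have "{y \<in> levi_vertices P L. levi_adj P L I (Inl p) y} = Inr ` {l \<in> L. I p l}"
      using that by (auto simp: levi_vertices_def levi_adj_Inl)
    then show ?thesis
      using assms(4) that by (simp add: card_image)
  qed
  moreover have "\<forall>x y. levi_adj P L I x y \<longrightarrow>
      (x \<in> Inr ` L \<and> y \<in> Inl ` P) \<or> (x \<in> Inl ` P \<and> y \<in> Inr ` L)"
    by (auto simp: levi_adj_def)
  ultimately show ?thesis
    using assms(5) unfolding bipartite_biregular_def levi_vertices_def
    by (intro conjI exI[of _ "Inr ` L"] exI[of _ "Inl ` P"]) auto
qed

lemma has_girth_levi_subgeometry:
  assumes "has_girth (levi_vertices P L) (levi_adj P L I) g" "P0 \<subseteq> P" "L0 \<subseteq> L"
    and "\<exists>c. is_cycle (levi_vertices P0 L0) (levi_adj P0 L0 I) c \<and> length c = g"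
  shows "has_girth (levi_vertices P0 L0) (levi_adj P0 L0 I) g"
proof -
  have "is_cycle (levi_vertices P L) (levi_adj P L I) c"
    if "is_cycle (levi_vertices P0 L0) (levi_adj P0 L0 I) c" for c
    using that by (rule is_cycle_mono) (use assms(2,3) in \<open>auto simp: levi_vertices_def levi_adj_def\<close>)
  then show ?thesis
    using assms(1,4) by (auto simp: has_girth_def)
qed

locale generalized_quadrangle =
  fixes P :: "'p set" and L :: "'l set" and I :: "'p \<Rightarrow> 'l \<Rightarrow> bool" and s t :: nat
  assumes finite_points: "finite P" and finite_lines: "finite L" and points_nonempty: "P \<noteq> {}"
    and no_digon: "\<lbrakk>x \<in> P; y \<in> P; k \<in> L; l \<in> L; I x k; I y k; I x l; I y l; x \<noteq> y\<rbrakk> \<Longrightarrow> k = l"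
    and no_triangle: "\<lbrakk>x \<in> P; y \<in> P; z \<in> P; j \<in> L; k \<in> L; l \<in> L;
      I x j; I y j; I y k; I z k; I z l; I x l; x \<noteq> y; y \<noteq> z; x \<noteq> z; j \<noteq> k; k \<noteq> l; j \<noteq> l\<rbrakk>
      \<Longrightarrow> False"
    and collinear_point_on_line:
      "\<lbrakk>p \<in> P; l \<in> L; \<not> I p l\<rbrakk> \<Longrightarrow> \<exists>q\<in>P. \<exists>k\<in>L. I p k \<and> I q k \<and> I q l"
    and points_on_line: "l \<in> L \<Longrightarrow> card {p \<in> P. I p l} = s + 1"
    and lines_through_point: "p \<in> P \<Longrightarrow> card {l \<in> L. I p l} = t + 1"

lemma generalized_quadrangleI:
  assumes "gen_quadrangle_of_order P L I s t"
  shows "generalized_quadrangle P L I s t"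
proof -
  let ?V = "levi_vertices P L" and ?E = "levi_adj P L I"
  have gq: "gen_quadrangle P L I" and order: "has_order P L I s t"
    using assms by (auto simp: gen_quadrangle_of_order_def)
  have short_cycle: False if "is_cycle ?V ?E c" "length c < 8" for c
    using gq that by (auto simp: gen_quadrangle_def has_girth_def)
  have diam: "reach_le ?V ?E 4 u v" if "u \<in> ?V" "v \<in> ?V" for u v
    using gq that by (auto simp: gen_quadrangle_def has_diameter_def)
  show ?thesis
  proof
    show "finite P" "finite L"
      using gq by (auto simp: gen_quadrangle_def)
    show "P \<noteq> {}"
    proof
      assume "P = {}"
      moreover obtain u where "u \<in> ?V"
        using gq by (auto simp: gen_quadrangle_def has_diameter_def)
      ultimately obtain l where "l \<in> L" and "card {p \<in> P. I p l} = 0"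
        by (auto simp: levi_vertices_def)
      then show False
        using order by (auto simp: has_order_def)
    qed
    show "k = l" if "x \<in> P" "y \<in> P" "k \<in> L" "l \<in> L" "I x k" "I y k" "I x l" "I y l" "x \<noteq> y"
      for x y k l
    proof (rule ccontr)
      assume "k \<noteq> l"
      then have "is_cycle ?V ?E [Inl x, Inr k, Inl y, Inr l]"
        using that by (auto simp: is_cycle_def levi_vertices_def)
      then show False by (rule short_cycle) simp
    qed
    show False if "x \<in> P" "y \<in> P" "z \<in> P" "j \<in> L" "k \<in> L" "l \<in> L"
      "I x j" "I y j" "I y k" "I z k" "I z l" "I x l" "x \<noteq> y" "y \<noteq> z" "x \<noteq> z" "j \<noteq> k" "k \<noteq> l" "j \<noteq> l"
      for x y z j k l
    proof -
      have "is_cycle ?V ?E [Inl x, Inr j, Inl y, Inr k, Inl z, Inr l]"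
        using that by (auto simp: is_cycle_def levi_vertices_def)
      then show False by (rule short_cycle) simp
    qed
    show "\<exists>q\<in>P. \<exists>k\<in>L. I p k \<and> I q k \<and> I q l" if pl: "p \<in> P" "l \<in> L" "\<not> I p l" for p l
    proof -
      obtain xs where xs: "set xs \<subseteq> ?V" "is_walk ?E xs" "hd xs = Inl p" "last xs = Inr l"
        "xs \<noteq> []" "length xs \<le> 5"
        using diam[of "Inl p" "Inr l"] pl by (auto simp: reach_le_def levi_vertices_def numeral_eq_Suc)
      consider a where "xs = [a]" | a b where "xs = [a, b]" | a b c where "xs = [a, b, c]"
        | a b c d where "xs = [a, b, c, d]" | a b c d e where "xs = [a, b, c, d, e]"
        using xs(5,6) by (auto simp: length_Suc_conv numeral_eq_Suc le_Suc_eq)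
      then show ?thesis
        by cases (use xs pl in \<open>fastforce simp: levi_adj_Inl levi_adj_Inr\<close>)+
    qed
    show "card {p \<in> P. I p l} = s + 1" if "l \<in> L" for l
      using order that by (simp add: has_order_def)
    show "card {l \<in> L. I p l} = t + 1" if "p \<in> P" for p
      using order that by (simp add: has_order_def)
  qed
qed

context generalized_quadrangle
begin

definition collinear :: "'p \<Rightarrow> 'p \<Rightarrow> bool" where
  "collinear x y \<longleftrightarrow> (\<exists>l\<in>L. I x l \<and> I y l)"

lemma exists_line_through: "p \<in> P \<Longrightarrow> \<exists>l\<in>L. I p l"
  using lines_through_point[of p]
  by (metis (no_types, lifting) Collect_empty_eq add_eq_0_iff_both_eq_0 card.empty zero_neq_one)

lemma collinear_refl: "p \<in> P \<Longrightarrow> collinear p p"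
  using exists_line_through by (auto simp: collinear_def)

lemma unique_collinear_point_on_line:
  assumes "p \<in> P" "l \<in> L" "\<not> I p l" and q: "q \<in> P" "I q l" "collinear p q"
    and q': "q' \<in> P" "I q' l" "collinear p q'"
  shows "q = q'"
proof (rule ccontr)
  assume "q \<noteq> q'"
  obtain k where k: "k \<in> L" "I p k" "I q k" using q by (auto simp: collinear_def)
  obtain k' where k': "k' \<in> L" "I p k'" "I q' k'" using q' by (auto simp: collinear_def)
  have "k \<noteq> k'"
    using no_digon[of q q' l k] \<open>q \<noteq> q'\<close> assms k k' by auto
  then show False
    using no_triangle[of p q q' k l k'] \<open>q \<noteq> q'\<close> assms k k' by auto
qed

lemma card_collinear_points:
  assumes "x \<in> P"
  shows "card {y \<in> P. y \<noteq> x \<and> collinear x y} = (t + 1) * s"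
proof -
  have "{y \<in> P. y \<noteq> x \<and> collinear x y} = (\<Union>l\<in>{l \<in> L. I x l}. {p \<in> P. I p l} - {x})"
    by (auto simp: collinear_def)
  also have "card \<dots> = (\<Sum>l\<in>{l \<in> L. I x l}. card ({p \<in> P. I p l} - {x}))"
    using finite_points finite_lines no_digon assms by (intro card_UN_disjoint) auto
  also have "\<dots> = (\<Sum>l\<in>{l \<in> L. I x l}. s)"
    using points_on_line assms finite_points by (simp add: card_Diff_singleton)
  finally show ?thesis
    using lines_through_point[OF assms] by simp
qed

lemma card_common_neighbours_of_noncollinear:
  assumes "x \<in> P" "y \<in> P" "\<not> collinear x y"
  shows "card {z \<in> P. z \<noteq> x \<and> collinear x z \<and> collinear y z} = t + 1"
proof -
  have "{z \<in> P. z \<noteq> x \<and> collinear x z \<and> collinear y z}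
      = (\<Union>k\<in>{k \<in> L. I y k}. {z \<in> P. I z k \<and> collinear x z})"
    using assms by (auto simp: collinear_def)
  also have "card \<dots> = (\<Sum>k\<in>{k \<in> L. I y k}. card {z \<in> P. I z k \<and> collinear x z})"
    using finite_points finite_lines no_digon assms
    by (intro card_UN_disjoint) (auto simp: collinear_def, metis)
  also have "\<dots> = (\<Sum>k\<in>{k \<in> L. I y k}. 1)"
  proof (rule sum.cong[OF refl])
    fix k assume k: "k \<in> {k \<in> L. I y k}"
    then have "\<not> I x k"
      using assms by (auto simp: collinear_def)
    then obtain q where "q \<in> P" "I q k" "collinear x q"
      using collinear_point_on_line[of x k] assms k by (auto simp: collinear_def)
    then have "{z \<in> P. I z k \<and> collinear x z} = {q}"
      using unique_collinear_point_on_line[of x k] \<open>\<not> I x k\<close> assms k by blast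
    then show "card {z \<in> P. I z k \<and> collinear x z} = 1" by simp
  qed
  finally show ?thesis
    using lines_through_point[OF assms(2)] by simp
qed

lemma card_noncollinear_neighbours:
  assumes "x \<in> P" "z \<in> P" "z \<noteq> x" "collinear x z"
  shows "card {y \<in> P. \<not> collinear x y \<and> collinear y z} = t * s"
proof -
  obtain e where e: "e \<in> L" "I x e" "I z e"
    using assms by (auto simp: collinear_def)
  have "{y \<in> P. \<not> collinear x y \<and> collinear y z} = (\<Union>k\<in>{k \<in> L. I z k} - {e}. {p \<in> P. I p k} - {z})"
  proof (intro equalityI subsetI)
    fix y assume "y \<in> {y \<in> P. \<not> collinear x y \<and> collinear y z}"
    then show "y \<in> (\<Union>k\<in>{k \<in> L. I z k} - {e}. {p \<in> P. I p k} - {z})"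
      using e assms(4) by (auto simp: collinear_def)
  next
    fix y assume "y \<in> (\<Union>k\<in>{k \<in> L. I z k} - {e}. {p \<in> P. I p k} - {z})"
    then obtain k where k: "k \<in> L" "I z k" "k \<noteq> e" "y \<in> P" "I y k" "y \<noteq> z" by auto
    have "y \<noteq> x"
      using no_digon[of x z k e] k e assms by auto
    have "\<not> collinear x y"
    proof
      assume "collinear x y"
      then obtain f where f: "f \<in> L" "I x f" "I y f" by (auto simp: collinear_def)
      have "f \<noteq> e" "f \<noteq> k"
        using no_digon[of y z e k] no_digon[of x z k e] k e f assms by auto
      then show False
        using no_triangle[of x z y e k f] assms k e f \<open>y \<noteq> x\<close> by auto
    qed
    then show "y \<in> {y \<in> P. \<not> collinear x y \<and> collinear y z}"
      using k by (auto simp: collinear_def)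
  qed
  also have "card \<dots> = (\<Sum>k\<in>{k \<in> L. I z k} - {e}. card ({p \<in> P. I p k} - {z}))"
    using finite_points finite_lines no_digon assms by (intro card_UN_disjoint) auto
  also have "\<dots> = (\<Sum>k\<in>{k \<in> L. I z k} - {e}. s)"
    using points_on_line assms finite_points by (simp add: card_Diff_singleton)
  also have "\<dots> = t * s"
    using lines_through_point[OF assms(2)] e finite_lines by (simp add: card_Diff_singleton)
  finally show ?thesis .
qed

lemma card_points: "card P = (s + 1) * (s * t + 1)"
proof -
  obtain x where x: "x \<in> P"
    using points_nonempty by auto
  define N where "N = {y \<in> P. y \<noteq> x \<and> collinear x y}"
  define R where "R = {y \<in> P. \<not> collinear x y}"
  have "finite N" "finite R"
    using finite_points by (auto simp: N_def R_def)
  have "P = insert x (N \<union> R)" "x \<notin> N \<union> R" "N \<inter> R = {}"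
    using x collinear_refl by (auto simp: N_def R_def)
  then have card_P: "card P = 1 + card N + card R"
    using \<open>finite N\<close> \<open>finite R\<close> by (simp add: card_Un_disjoint)
  have card_N: "card N = (t + 1) * s"
    using card_collinear_points[OF x] by (simp add: N_def)
  have "card {y \<in> R. collinear y z} = t * s" if "z \<in> N" for z
  proof -
    have "{y \<in> R. collinear y z} = {y \<in> P. \<not> collinear x y \<and> collinear y z}"
      by (auto simp: R_def)
    then show ?thesis
      using card_noncollinear_neighbours[OF x] that by (simp add: N_def)
  qed
  then have "(\<Sum>y\<in>R. card {z \<in> N. collinear y z}) = t * s * card N"
    using \<open>finite N\<close> \<open>finite R\<close> by (intro sum_multicount) auto
  moreover have "card {z \<in> N. collinear y z} = t + 1" if "y \<in> R" for y
  proof -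
    have "{z \<in> N. collinear y z} = {z \<in> P. z \<noteq> x \<and> collinear x z \<and> collinear y z}"
      by (auto simp: N_def)
    then show ?thesis
      using card_common_neighbours_of_noncollinear[OF x] that by (simp add: R_def)
  qed
  ultimately have "card R * (t + 1) = s * s * t * (t + 1)"
    using card_N by (simp add: algebra_simps)
  then have "card R = s * s * t"
    using mult_cancel2[of "card R" "t + 1" "s * s * t"] by simp
  then show ?thesis
    using card_P card_N by (simp add: algebra_simps)
qed

lemma dual: "generalized_quadrangle L P (\<lambda>l p. I p l) t s"
proof
  show "L \<noteq> {}"
    using points_nonempty exists_line_through by blast
  show "k = l" if "x \<in> L" "y \<in> L" "k \<in> P" "l \<in> P" "I k x" "I l x" "I k y" "I l y" "x \<noteq> y"
    for x y k l
    using no_digon[of k l x y] that by blast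
  show False if "x \<in> L" "y \<in> L" "z \<in> L" "j \<in> P" "k \<in> P" "l \<in> P"
    "I j x" "I j y" "I k y" "I k z" "I l z" "I l x" "x \<noteq> y" "y \<noteq> z" "x \<noteq> z" "j \<noteq> k" "k \<noteq> l" "j \<noteq> l"
    for x y z j k l
    using no_triangle[of j k l y z x] that by blast
  show "\<exists>q\<in>L. \<exists>k\<in>P. I k p \<and> I k q \<and> I l q" if "p \<in> L" "l \<in> P" "\<not> I l p" for p l
    using collinear_point_on_line[of l p] that by blast
qed (use finite_points finite_lines points_on_line lines_through_point in auto)

lemma card_lines: "card L = (t + 1) * (t * s + 1)"
  using generalized_quadrangle.card_points[OF dual] .

lemma levi_cycle_of_common_neighbours:
  assumes sub: "P0 \<subseteq> P" "L0 \<subseteq> L"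
    and in0: "p \<in> P0" "a \<in> P0" "z \<in> P0" "b \<in> P0" "k1 \<in> L0" "j \<in> L0" "r \<in> L0" "k2 \<in> L0"
    and inc: "I p k1" "I a k1" "I a j" "I z j" "I z r" "I b r" "I b k2" "I p k2"
    and "\<not> collinear a b" "p \<noteq> z"
  shows "is_cycle (levi_vertices P0 L0) (levi_adj P0 L0 I)
    [Inl p, Inr k1, Inl a, Inr j, Inl z, Inr r, Inl b, Inr k2]"
proof -
  have mem: "p \<in> P" "a \<in> P" "z \<in> P" "b \<in> P" "k1 \<in> L" "j \<in> L" "r \<in> L" "k2 \<in> L"
    using sub in0 by auto
  have ab: "\<not> (I a l \<and> I b l)" if "l \<in> L" for l
    using \<open>\<not> collinear a b\<close> that by (auto simp: collinear_def)
  have lines: "k1 \<noteq> k2" "k1 \<noteq> r" "j \<noteq> k2" "j \<noteq> r"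
    using ab mem inc by auto
  have points: "p \<noteq> a" "p \<noteq> b" "z \<noteq> a" "z \<noteq> b" "a \<noteq> b"
    using ab mem inc by auto
  have "k1 \<noteq> j"
  proof
    assume "k1 = j"
    then have "r \<noteq> k2"
      using no_digon[of p z k1 k2] \<open>p \<noteq> z\<close> lines mem inc by auto
    then show False
      using no_triangle[of p z b k1 r k2] \<open>k1 = j\<close> \<open>p \<noteq> z\<close> points lines mem inc by auto
  qed
  moreover have "r \<noteq> k2"
  proof
    assume "r = k2"
    then show False
      using no_triangle[of p a z k1 j k2] \<open>k1 \<noteq> j\<close> \<open>p \<noteq> z\<close> points lines mem inc by auto
  qed
  ultimately show ?thesis
    using \<open>p \<noteq> z\<close> points lines in0 inc by (auto simp: is_cycle_def levi_vertices_def)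
qed

end

locale gq_subquadrangle =
  G: generalized_quadrangle P L I s t + H: generalized_quadrangle P' L' I s t'
  for P :: "'p set" and L :: "'l set" and I s t and P' L' t' +
  assumes sub_points: "P' \<subseteq> P" and sub_lines: "L' \<subseteq> L"

lemma gq_subquadrangleI:
  assumes "gen_quadrangle_of_order P L I s t" "subquadrangle P' L' P L I" "has_order P' L' I s t'"
  shows "gq_subquadrangle P L I s t P' L' t'"
proof -
  have "generalized_quadrangle P L I s t" "generalized_quadrangle P' L' I s t'"
    using assms by (auto intro!: generalized_quadrangleI simp: gen_quadrangle_of_order_def subquadrangle_def)
  then show ?thesis
    using assms(2) by (simp add: gq_subquadrangle_def gq_subquadrangle_axioms_def subquadrangle_def)
qed

context gq_subquadrangle
begin

lemma point_on_sub_line: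
  assumes "l \<in> L'" "p \<in> P" "I p l"
  shows "p \<in> P'"
proof -
  have "{q \<in> P'. I q l} = {q \<in> P. I q l}"
    using G.finite_points sub_points sub_lines assms H.points_on_line G.points_on_line
    by (intro card_subset_eq) auto
  then show ?thesis
    using assms by auto
qed

lemma line_through_outer_point:
  assumes "p \<in> P - P'" "l \<in> L" "I p l"
  shows "l \<in> L - L'"
  using point_on_sub_line assms by blast

lemma outer_line_meets_sub_at_most_once:
  assumes l: "l \<in> L - L'" and xy: "x \<in> P'" "y \<in> P'" "I x l" "I y l"
  shows "x = y"
proof (rule ccontr)
  assume "x \<noteq> y"
  have in_G: "x \<in> P" "y \<in> P" "l \<in> L"
    using xy l sub_points by auto
  obtain k where k: "k \<in> L'" "I x k"
    using H.exists_line_through xy by blast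
  have "k \<noteq> l" "k \<in> L"
    using k l sub_lines by auto
  then have "\<not> I y k"
    using G.no_digon[of x y k l] \<open>x \<noteq> y\<close> in_G k xy by auto
  then obtain q j where qj: "q \<in> P'" "j \<in> L'" "I y j" "I q j" "I q k"
    using H.collinear_point_on_line[of y k] xy k by auto
  have "j \<noteq> l" "j \<in> L" "q \<in> P"
    using qj l sub_lines sub_points by auto
  then have "q \<noteq> x"
    using G.no_digon[of x y j l] \<open>x \<noteq> y\<close> in_G qj xy by auto
  moreover have "q \<noteq> y" "j \<noteq> k"
    using \<open>\<not> I y k\<close> qj by auto
  ultimately show False
    using G.no_triangle[of x y q l j k] \<open>x \<noteq> y\<close> \<open>k \<noteq> l\<close> \<open>j \<noteq> l\<close> \<open>k \<in> L\<close> \<open>j \<in> L\<close>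
      \<open>q \<in> P\<close> in_G qj k xy by auto
qed

lemma sub_order_le: "t' \<le> t"
proof -
  obtain x where x: "x \<in> P'"
    using H.points_nonempty by auto
  then have "card {l \<in> L'. I x l} \<le> card {l \<in> L. I x l}"
    using sub_lines G.finite_lines by (intro card_mono) auto
  then show ?thesis
    using H.lines_through_point[OF x] G.lines_through_point x sub_points by auto
qed

lemma card_outer_lines:
  assumes "t = s * t'"
  shows "card (L - L') = card P' * (t - t')"
proof -
  have "(t + 1) * (t * s + 1) = (s + 1) * (s * t' + 1) * (t - t') + (t' + 1) * (t' * s + 1)"
  proof (cases s)
    case 0
    then show ?thesis using assms sub_order_le by simp
  next
    case (Suc k)
    then have "t - t' = k * t'"
      using assms by simp
    then show ?thesis
      using assms Suc by (simp add: algebra_simps)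
  qed
  then have "card L = card P' * (t - t') + card L'"
    using G.card_lines H.card_lines H.card_points by simp
  moreover have "card (L - L') = card L - card L'"
    using sub_lines G.finite_lines by (simp add: card_Diff_subset finite_subset)
  ultimately show ?thesis
    by simp
qed

lemma outer_line_meets_sub_once:
  assumes "t = s * t'" "l \<in> L - L'"
  shows "card {x \<in> P'. I x l} = 1"
proof -
  have fin: "finite (L - L')" "finite P'"
    using G.finite_lines H.finite_points by auto
  have at_most_one: "card {x \<in> P'. I x l} \<le> 1" if "l \<in> L - L'" for l
    using outer_line_meets_sub_at_most_once[OF that] fin by (simp add: card_le_Suc0_iff_eq)
  have "card {l \<in> L - L'. I x l} = t - t'" if "x \<in> P'" for x
  proof -
    have "{l \<in> L - L'. I x l} = {l \<in> L. I x l} - {l \<in> L'. I x l}"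
      by auto
    moreover have "{l \<in> L'. I x l} \<subseteq> {l \<in> L. I x l}" "finite {l \<in> L'. I x l}"
      using sub_lines H.finite_lines by auto
    ultimately show ?thesis
      using G.lines_through_point H.lines_through_point that sub_points
      by (auto simp: card_Diff_subset)
  qed
  then have "(\<Sum>l\<in>L - L'. card {x \<in> P'. I x l}) = (t - t') * card P'"
    using fin by (intro sum_multicount) auto
  \<comment> \<open>Here t = s * t' enters: the sum of these numbers, each at most 1, is the number of terms.\<close>
  also have "\<dots> = (\<Sum>l\<in>L - L'. 1)"
    using card_outer_lines[OF assms(1)] by simp
  finally have "(\<Sum>l\<in>L - L'. card {x \<in> P'. I x l}) = (\<Sum>l\<in>L - L'. 1)" .
  then show ?thesis
    using sum_mono_inv[of "\<lambda>l. card {x \<in> P'. I x l}" "L - L'" "\<lambda>_. 1" l] at_most_one assms(2) fin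
    by auto
qed

lemma card_outer_points_on_outer_line:
  assumes "t = s * t'" "l \<in> L - L'"
  shows "card {p \<in> P - P'. I p l} = s"
proof -
  have "{p \<in> P - P'. I p l} = {p \<in> P. I p l} - {x \<in> P'. I x l}"
    by auto
  moreover have "{x \<in> P'. I x l} \<subseteq> {p \<in> P. I p l}" "finite {x \<in> P'. I x l}"
    using sub_points H.finite_points by auto
  ultimately show ?thesis
    using outer_line_meets_sub_once[OF assms] G.points_on_line assms(2)
    by (simp add: card_Diff_subset)
qed

lemma card_outer_lines_through_outer_point:
  assumes "p \<in> P - P'"
  shows "card {l \<in> L - L'. I p l} = t + 1"
proof -
  have "{l \<in> L - L'. I p l} = {l \<in> L. I p l}"
    using line_through_outer_point assms by auto
  then show ?thesis
    using G.lines_through_point assms by simp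
qed

lemma card_outer_levi_vertices:
  assumes "t = s * t'"
  shows "card (levi_vertices (P - P') (L - L')) = (s + t + 1) * (s\<^sup>2 - 1) * t'"
proof -
  have "card (levi_vertices (P - P') (L - L')) = card (P - P') + card (L - L')"
    using G.finite_points G.finite_lines by (simp add: card_levi_vertices)
  also have "card (P - P') = card P - card P'"
    using sub_points H.finite_points by (simp add: card_Diff_subset)
  also have "card P - card P' + card (L - L') = (s + t + 1) * (s\<^sup>2 - 1) * t'"
  proof (cases s)
    case 0
    then show ?thesis
      using assms sub_order_le card_outer_lines[OF assms] G.card_points H.card_points by simp
  next
    case (Suc k)
    then have "t - t' = k * t'"
      using assms by simp
    then show ?thesis
      using assms Suc card_outer_lines[OF assms] G.card_points H.card_points
      by (simp add: power2_eq_square algebra_simps)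
  qed
  finally show ?thesis .
qed

lemma exists_outer_common_neighbour:
  assumes "t = s * t'"
    and pab: "p \<in> P - P'" "a \<in> P - P'" "b \<in> P - P'"
    and k12: "k1 \<in> L" "k2 \<in> L" "k1 \<noteq> k2" "I p k1" "I a k1" "I p k2" "I b k2"
    and "\<not> G.collinear a b"
  shows "\<exists>z\<in>P - P'. z \<noteq> p \<and> (\<exists>j\<in>L. \<exists>r\<in>L. I a j \<and> I z j \<and> I z r \<and> I b r)"
proof -
  \<comment> \<open>Project b onto a subquadrangle line l through the point x1 of k1 and project the result
    w onto a. The point z so found is collinear with a and b; z = p or z \<in> P' would close a
    triangle through x1.\<close>
  have ab: "\<not> (I a e \<and> I b e)" if "e \<in> L" for e
    using \<open>\<not> G.collinear a b\<close> that by (auto simp: G.collinear_def)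
  have k12_outer: "k1 \<in> L - L'" "k2 \<in> L - L'"
    using line_through_outer_point pab k12 by auto
  obtain x1 where x1: "x1 \<in> P'" "I x1 k1"
    using outer_line_meets_sub_once[OF assms(1) k12_outer(1)] by (auto simp: card_1_singleton_iff)
  obtain l where l: "l \<in> L'" "I x1 l"
    using H.exists_line_through x1 by blast
  have "\<not> I b l"
    using point_on_sub_line l pab by blast
  then obtain w r where wr: "w \<in> P" "r \<in> L" "I b r" "I w r" "I w l"
    using G.collinear_point_on_line[of b l] pab l sub_lines by blast
  have "w \<in> P'"
    using point_on_sub_line l wr by blast
  have "\<not> I a r"
    using ab wr by blast
  then obtain z j where zj: "z \<in> P" "j \<in> L" "I a j" "I z j" "I z r"
    using G.collinear_point_on_line[of a r] pab wr by blast
  have outer: "r \<in> L - L'" "j \<in> L - L'" "l \<notin> L - L'"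
    using line_through_outer_point pab wr zj l by auto
  have "p \<noteq> b" "p \<noteq> x1" "b \<noteq> x1" "a \<noteq> x1" "a \<noteq> w" "p \<noteq> w"
    using ab k12 pab x1 \<open>w \<in> P'\<close> by auto
  have in_G: "p \<in> P" "b \<in> P" "a \<in> P" "x1 \<in> P" "l \<in> L"
    using pab x1 l sub_points sub_lines by auto
  have "z \<noteq> p"
  proof
    assume "z = p"
    then have "r = k2"
      using G.no_digon[of p b r k2] \<open>p \<noteq> b\<close> in_G k12 wr zj by auto
    moreover have "x1 \<noteq> w"
      using G.no_digon[of p x1 k1 k2] \<open>p \<noteq> x1\<close> \<open>r = k2\<close> in_G k12 x1 wr by auto
    ultimately show False
      using G.no_triangle[of p x1 w k1 l k2] \<open>p \<noteq> x1\<close> \<open>p \<noteq> w\<close> in_G k12 k12_outer outer x1 l wr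
      by auto
  qed
  moreover have "z \<notin> P'"
  proof
    assume "z \<in> P'"
    then have "z = w"
      using outer_line_meets_sub_at_most_once[OF outer(1)] \<open>w \<in> P'\<close> wr zj by blast
    have "x1 \<noteq> w"
    proof
      assume "x1 = w"
      moreover have "k1 \<noteq> r"
        using G.no_digon[of p b k1 k2] \<open>p \<noteq> b\<close> in_G k12 wr by auto
      moreover have "r \<noteq> k2"
        using G.no_digon[of p x1 k1 k2] \<open>p \<noteq> x1\<close> \<open>x1 = w\<close> in_G k12 x1 wr by auto
      ultimately show False
        using G.no_triangle[of p x1 b k1 r k2] \<open>p \<noteq> x1\<close> \<open>p \<noteq> b\<close> \<open>b \<noteq> x1\<close> in_G k12 x1 wr
        by auto
    qed
    moreover have "k1 \<noteq> j"
      using G.no_digon[of x1 w k1 l] \<open>z = w\<close> \<open>x1 \<noteq> w\<close> in_G k12 k12_outer outer x1 l wr zj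
      by auto
    ultimately show False
      using G.no_triangle[of a x1 w k1 l j] \<open>z = w\<close> \<open>a \<noteq> x1\<close> \<open>a \<noteq> w\<close>
        in_G k12 k12_outer outer x1 l wr zj
      by auto
  qed
  ultimately show ?thesis
    using zj wr by blast
qed

lemma outer_levi_has_octagon:
  assumes "2 \<le> s" "1 \<le> t'" "t = s * t'"
  shows "\<exists>c. is_cycle (levi_vertices (P - P') (L - L')) (levi_adj (P - P') (L - L') I) c
    \<and> length c = 8"
proof -
  have "2 * t' \<le> s * t'"
    using assms(1) by (rule mult_le_mono1)
  then have "t' < t"
    using assms(2,3) by linarith
  then have "card P' < card P"
    unfolding G.card_points H.card_points using assms(1) by (intro mult_strict_left_mono) auto
  then have "P \<noteq> P'"
    by auto
  then obtain p where p: "p \<in> P - P'"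
    using sub_points by blast
  obtain k1 where k1: "k1 \<in> L" "I p k1"
    using G.exists_line_through p by blast
  have "2 \<le> card {l \<in> L. I p l}"
    using G.lines_through_point p \<open>t' < t\<close> by simp
  then obtain k2 where "k2 \<in> L" "I p k2" "k2 \<noteq> k1"
    using card_ge_2_ex_other[of "{l \<in> L. I p l}" k1] by auto
  with k1 have k12: "k1 \<in> L" "k2 \<in> L" "k1 \<noteq> k2" "I p k1" "I p k2"
    by auto
  then have outer: "k1 \<in> L - L'" "k2 \<in> L - L'"
    using line_through_outer_point p by auto
  obtain a where a: "a \<in> P - P'" "I a k1" "a \<noteq> p"
    using card_ge_2_ex_other[of "{q \<in> P - P'. I q k1}" p]
      card_outer_points_on_outer_line[OF assms(3) outer(1)] assms(1) by auto
  obtain b where b: "b \<in> P - P'" "I b k2" "b \<noteq> p"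
    using card_ge_2_ex_other[of "{q \<in> P - P'. I q k2}" p]
      card_outer_points_on_outer_line[OF assms(3) outer(2)] assms(1) by auto
  have "\<not> G.collinear a b"
  proof
    assume "G.collinear a b"
    then obtain e where e: "e \<in> L" "I a e" "I b e"
      by (auto simp: G.collinear_def)
    have "a \<noteq> b" "k1 \<noteq> e" "e \<noteq> k2"
      using G.no_digon[of p a k1 k2] G.no_digon[of p b k1 k2] a b e k12 p by auto
    then show False
      using G.no_triangle[of p a b k1 e k2] a b e k12 p by auto
  qed
  then obtain z j r where zjr: "z \<in> P - P'" "z \<noteq> p" "j \<in> L" "r \<in> L"
      "I a j" "I z j" "I z r" "I b r"
    using exists_outer_common_neighbour[OF assms(3) p a(1) b(1) k12(1-4) a(2) k12(5) b(2)]
    by blast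
  then have "j \<in> L - L'" "r \<in> L - L'"
    using line_through_outer_point a b by auto
  then have "is_cycle (levi_vertices (P - P') (L - L')) (levi_adj (P - P') (L - L') I)
      [Inl p, Inr k1, Inl a, Inr j, Inl z, Inr r, Inl b, Inr k2]"
    by (intro G.levi_cycle_of_common_neighbours)
      (use \<open>\<not> G.collinear a b\<close> p a b zjr k12 outer in auto)
  then show ?thesis
    by fastforce
qed

lemma outer_levi_bipartite_biregular:
  assumes "2 \<le> s" "1 \<le> t'" "t = s * t'"
    and "has_girth (levi_vertices P L) (levi_adj P L I) 8"
  shows "bipartite_biregular s (t + 1) 8
    (levi_vertices (P - P') (L - L')) (levi_adj (P - P') (L - L') I)"
proof (rule levi_bipartite_biregular)
  show "has_girth (levi_vertices (P - P') (L - L')) (levi_adj (P - P') (L - L') I) 8"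
    by (rule has_girth_levi_subgeometry[OF assms(4) Diff_subset Diff_subset
        outer_levi_has_octagon[OF assms(1-3)]])
qed (use G.finite_points G.finite_lines card_outer_points_on_outer_line[OF assms(3)]
    card_outer_lines_through_outer_point in auto)

end

theorem mainTheorem6:
  fixes m n :: nat
    and P P' :: "'p set" and L L' :: "'l set" and I :: "'p \<Rightarrow> 'l \<Rightarrow> bool"
  assumes "m \<ge> 2" and "n \<ge> 2" and "m dvd n"
    and "gen_quadrangle_of_order P L I m n"
    and "subquadrangle P' L' P L I"
    and "has_order P' L' I m (n div m)"
  shows "\<exists>(V :: nat set) E. bipartite_biregular m (n + 1) 8 V E \<and>
           card V = (m + n + 1) * (m\<^sup>2 - 1) * (n div m)"
proof -
  define t' where "t' = n div m"
  have n: "n = m * t'"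
    using assms(3) by (simp add: t'_def)
  then have "1 \<le> t'"
    using assms(2) by (cases t') auto
  interpret gq_subquadrangle P L I m n P' L' t'
    using gq_subquadrangleI[OF assms(4,5)] assms(6) by (simp add: t'_def)
  have "has_girth (levi_vertices P L) (levi_adj P L I) 8"
    using assms(4) by (simp add: gen_quadrangle_of_order_def gen_quadrangle_def)
  then have "bipartite_biregular m (n + 1) 8
      (levi_vertices (P - P') (L - L')) (levi_adj (P - P') (L - L') I)"
    by (rule outer_levi_bipartite_biregular[OF assms(1) \<open>1 \<le> t'\<close> n])
  moreover have "card (levi_vertices (P - P') (L - L')) = (m + n + 1) * (m\<^sup>2 - 1) * t'"
    by (rule card_outer_levi_vertices[OF n])
  ultimately show ?thesis
    unfolding t'_def by (metis bipartite_biregular_nat_copy)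
qed

end
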